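(* Fix positive numbers $l^0_{ij},l^0_{jk},l^0_{ki}$ and let $W^\diamond=\{(w_i,w_j,w_k)\in\mathbb{R}^3: w_r+w_s>-\ln\cosh\frac{l^0_{rs}}{2}\text{ for all }\{r,s\}\subset\{i,j,k\}\}$. For $(w_i,w_j,w_k)\in W^\diamond$ define $l_{ij},l_{jk},l_{ki}>0$ by $\cosh\frac{l_{rs}}{2}=e^{w_r+w_s}\cosh\frac{l^0_{rs}}{2}$, and let $\theta_i,\theta_j,\theta_k$ be the lengths of the sides opposite to the sides of lengths $l_{jk},l_{ki},l_{ij}$, respectively, in the right-angled hyperbolic hexagon whose three pairwise non-adjacent sides have lengths $l_{ij},l_{jk},l_{ki}$. Then the Jacobian matrix $\frac{\partial(\theta_i,\theta_j,\theta_k)}{\partial(w_i,w_j,w_k)}$ is symmetric, strictly diagonally dominant (i.e. for each row $r$, $|\partial\theta_r/\partial w_r|>\sum_{s\ne r}|\partial\theta_r/\partial w_s|$), and negative definite on $W^\diamond$.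
   Context: In a right-angled hyperbolic hexagon with pairwise non-adjacent sides of lengths $l_{ij},l_{jk},l_{ki}$, the opposite side lengths satisfy the cosine law $\cosh\theta_i=\frac{\cosh l_{jk}+\cosh l_{ki}\cosh l_{ij}}{\sinh l_{ki}\sinh l_{ij}}$ (and cyclically), and the sine law $\frac{\sinh\theta_i}{\sinh l_{jk}}=\frac{\sinh\theta_j}{\sinh l_{ki}}=\frac{\sinh\theta_k}{\sinh l_{ij}}$. *)

theory Defs
  imports "HOL-Analysis.Analysis"
begin

text \<open>Indices i, j, k are represented by the elements 1, 2, 3 of the type 3.
  Coordinates: w = (w_i, w_j, w_k) = (w$1, w$2, w$3).\<close>

text \<open>Length of the side opposite to the side of length a in the right-angled
  hyperbolic hexagon whose pairwise non-adjacent sides have lengths a, b, c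
  (cosine law).\<close>
definition hex_opp :: "real \<Rightarrow> real \<Rightarrow> real \<Rightarrow> real" where
  "hex_opp a b c = arcosh ((cosh a + cosh b * cosh c) / (sinh b * sinh c))"

definition edge_len :: "real \<Rightarrow> real \<Rightarrow> real \<Rightarrow> real" where
  "edge_len l0 x y = 2 * arcosh (exp (x + y) * cosh (l0 / 2))"

definition W_dia :: "real \<Rightarrow> real \<Rightarrow> real \<Rightarrow> (real ^ 3) set" where
  "W_dia l0ij l0jk l0ki = {w.
      w$1 + w$2 > - ln (cosh (l0ij / 2)) \<and>
      w$2 + w$3 > - ln (cosh (l0jk / 2)) \<and>
      w$3 + w$1 > - ln (cosh (l0ki / 2))}"

definition theta_map :: "real \<Rightarrow> real \<Rightarrow> real \<Rightarrow> real ^ 3 \<Rightarrow> real ^ 3" where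
  "theta_map l0ij l0jk l0ki w =
     (let lij = edge_len l0ij (w$1) (w$2);
          ljk = edge_len l0jk (w$2) (w$3);
          lki = edge_len l0ki (w$3) (w$1)
      in (\<chi> r. if r = 1 then hex_opp ljk lki lij
               else if r = 2 then hex_opp lki lij ljk
               else hex_opp lij ljk lki))"

end

theory Submission
  imports Defs
begin

text \<open>By the cosine law \<open>\<theta>\<^sub>i = arcosh ((cosh a + cosh b cosh c) / (sinh b sinh c))\<close>,
  and each side length satisfies \<open>\<partial>l/\<partial>w = 2 sinh l / (cosh l - 1)\<close> in both of its
  endpoints. With \<open>x, y, z\<close> the cosh of the sides and \<open>\<Delta> = x\<^sup>2 + y\<^sup>2 + z\<^sup>2 + 2xyz - 1\<close>
  (so that \<open>sinh \<theta>\<^sub>i = \<surd>\<Delta> / (sinh b sinh c)\<close>), the chain rule gives a Jacobian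
  \<open>2/\<surd>\<Delta>\<close> times a matrix whose \<open>(r,s)\<close> entry is \<open>(c\<^sub>t - c\<^sub>r - c\<^sub>s - 1)/(c\<^sub>t - 1)\<close>,
  \<open>t\<close> the third index, which is visibly symmetric. The diagonal entry of row \<open>r\<close> is
  minus the sum of the two positive quantities \<open>(c\<^sub>t + c\<^sub>r c\<^sub>s)/(c\<^sub>s - 1)\<close>, and each of
  them strictly dominates the absolute value of one off-diagonal entry. A symmetric
  matrix with negative, strictly dominant diagonal is negative definite.\<close>

lemma cosh_gt_1_real: "0 < x \<Longrightarrow> 1 < cosh (x::real)"
  using cosh_real_ge_1[of x] cosh_real_one_iff[of x] by linarith

lemma has_derivative_cosh_real [derivative_intros]:
  fixes f :: "'a::real_normed_vector \<Rightarrow> real"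
  assumes "(f has_derivative f') (at w within S)"
  shows "((\<lambda>x. cosh (f x)) has_derivative (\<lambda>h. f' h * sinh (f w))) (at w within S)"
  by (rule DERIV_compose_FDERIV[OF _ assms]) (auto intro!: derivative_eq_intros)

lemma has_derivative_sinh_real [derivative_intros]:
  fixes f :: "'a::real_normed_vector \<Rightarrow> real"
  assumes "(f has_derivative f') (at w within S)"
  shows "((\<lambda>x. sinh (f x)) has_derivative (\<lambda>h. f' h * cosh (f w))) (at w within S)"
  by (rule DERIV_compose_FDERIV[OF _ assms]) (auto intro!: derivative_eq_intros)

lemma has_derivative_vec_iff:
  fixes f :: "'a::real_normed_vector \<Rightarrow> real^'n"
  shows "(f has_derivative f') (at w within S)
           \<longleftrightarrow> (\<forall>k. ((\<lambda>x. f x $ k) has_derivative (\<lambda>h. f' h $ k)) (at w within S))"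
  by (subst has_derivative_componentwise_within) (auto simp: Basis_vec_def inner_axis)

lemma neg_definite_if_diag_dominant:
  fixes A :: "real^'n^'n"
  assumes sym: "transpose A = A" and neg: "\<And>r. A $ r $ r < 0"
    and dom: "\<And>r. (\<Sum>s\<in>UNIV - {r}. \<bar>A $ r $ s\<bar>) < \<bar>A $ r $ r\<bar>"
    and "h \<noteq> 0"
  shows "h \<bullet> (A *v h) < 0"
proof -
  define R where "R r = (\<Sum>s\<in>UNIV - {r}. \<bar>A $ r $ s\<bar>)" for r
  define Q where "Q r = (\<Sum>s\<in>UNIV - {r}. \<bar>A $ r $ s\<bar> * (h $ s)\<^sup>2)" for r
  have amgm: "A $ r $ s * h $ r * h $ s \<le> \<bar>A $ r $ s\<bar> * ((h $ r)\<^sup>2 + (h $ s)\<^sup>2) / 2" for r s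
  proof -
    have "A $ r $ s * h $ r * h $ s \<le> \<bar>A $ r $ s\<bar> * (\<bar>h $ r\<bar> * \<bar>h $ s\<bar>)"
      by (metis abs_ge_self abs_mult mult.assoc)
    also have "\<dots> \<le> \<bar>A $ r $ s\<bar> * (((h $ r)\<^sup>2 + (h $ s)\<^sup>2) / 2)"
      using sum_squares_bound[of "\<bar>h $ r\<bar>" "\<bar>h $ s\<bar>"] by (intro mult_left_mono) auto
    finally show ?thesis by simp
  qed
  have row: "(\<Sum>s\<in>UNIV. A $ r $ s * h $ r * h $ s) \<le> A $ r $ r * (h $ r)\<^sup>2 + (R r * (h $ r)\<^sup>2 + Q r) / 2" for r
  proof -
    have "(\<Sum>s\<in>UNIV. A $ r $ s * h $ r * h $ s)
        = A $ r $ r * (h $ r)\<^sup>2 + (\<Sum>s\<in>UNIV - {r}. A $ r $ s * h $ r * h $ s)"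
      by (simp add: sum.remove[of UNIV r] power2_eq_square mult.assoc)
    also have "(\<Sum>s\<in>UNIV - {r}. A $ r $ s * h $ r * h $ s)
        \<le> (\<Sum>s\<in>UNIV - {r}. \<bar>A $ r $ s\<bar> * ((h $ r)\<^sup>2 + (h $ s)\<^sup>2) / 2)"
      by (rule sum_mono) (rule amgm)
    also have "\<dots> = (R r * (h $ r)\<^sup>2 + Q r) / 2"
      unfolding R_def Q_def
      by (simp add: sum_divide_distrib[symmetric] sum_distrib_right sum.distrib distrib_left)
    finally show ?thesis by simp
  qed
  txt \<open>Symmetry moves the \<open>(h$s)\<^sup>2\<close> halves of the bounds \<open>amgm\<close> into row \<open>s\<close>.\<close>
  have swap: "(\<Sum>r\<in>UNIV. Q r) = (\<Sum>r\<in>UNIV. R r * (h $ r)\<^sup>2)"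
  proof -
    have "(\<Sum>r\<in>UNIV. Q r) = (\<Sum>s\<in>UNIV. \<Sum>r\<in>UNIV - {s}. \<bar>A $ r $ s\<bar> * (h $ s)\<^sup>2)"
      unfolding Q_def by (simp add: sum_diff1 sum_subtractf) (rule sum.swap)
    also have "\<dots> = (\<Sum>r\<in>UNIV. R r * (h $ r)\<^sup>2)"
      using sym by (simp add: R_def sum_distrib_right vec_eq_iff transpose_def)
    finally show ?thesis .
  qed
  have "h \<bullet> (A *v h) = (\<Sum>r\<in>UNIV. \<Sum>s\<in>UNIV. A $ r $ s * h $ r * h $ s)"
    by (simp add: inner_vec_def matrix_vector_mult_def sum_distrib_left mult_ac)
  also have "\<dots> \<le> (\<Sum>r\<in>UNIV. A $ r $ r * (h $ r)\<^sup>2 + (R r * (h $ r)\<^sup>2 + Q r) / 2)"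
    by (rule sum_mono) (rule row)
  also have "\<dots> = (\<Sum>r\<in>UNIV. (A $ r $ r + R r) * (h $ r)\<^sup>2)"
    using swap by (simp add: sum.distrib sum_divide_distrib[symmetric] algebra_simps)
  also have "\<dots> < 0"
  proof -
    have coeff: "A $ r $ r + R r < 0" for r
      using neg[of r] dom[of r] by (simp add: R_def)
    obtain r0 where "h $ r0 \<noteq> 0" using \<open>h \<noteq> 0\<close> by (auto simp: vec_eq_iff)
    then have "(A $ r0 $ r0 + R r0) * (h $ r0)\<^sup>2 < 0"
      using coeff by (simp add: mult_neg_pos)
    moreover have "(\<Sum>r\<in>UNIV - {r0}. (A $ r $ r + R r) * (h $ r)\<^sup>2) \<le> 0"
      using coeff by (intro sum_nonpos mult_nonpos_nonneg) (auto intro: less_imp_le)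
    ultimately show ?thesis by (simp add: sum.remove[of UNIV r0])
  qed
  finally show ?thesis .
qed

lemma one_less_exp_mult_iff:
  assumes "0 < (C :: real)"
  shows "1 < exp s * C \<longleftrightarrow> - ln C < s"
proof -
  have "exp s * C = exp (s + ln C)" using assms by (simp add: exp_add)
  then show ?thesis by auto
qed

lemma add_3_type_3: "r + 3 = (r :: 3)"
  by simp

lemma UNIV_3_rotate: "UNIV = {r, r + 1, r + 2 :: 3}"
proof -
  have "x = r + (x - r)" for x :: 3 by simp
  then have "x \<in> {r, r + 1, r + 2}" for x
    using exhaust_3[of "x - r"] by (metis add_3_type_3 insertCI)
  then show ?thesis by blast
qed

lemma UNIV_3_minus: "UNIV - {r} = {r + 1, r + 2 :: 3}"
  by (subst UNIV_3_rotate[of r]) auto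

text \<open>Simp evaluates index sums such as \<open>3 + 1\<close> to the numeral \<open>4\<close> without
  reducing it modulo 3.\<close>

lemma numeral_reduce_3: "(4 :: 3) = 1" "(5 :: 3) = 2"
  by simp_all

lemma third_index_3:
  fixes r :: 3
  shows "- (r + (r + 1)) = r + 2" and "- (r + (r + 2)) = r + 1"
  using exhaust_3[of r] by auto

lemma matrix_vector_mult_nth_3:
  fixes A :: "real^3^3"
  shows "(A *v h) $ r = A $ r $ r * h $ r + A $ r $ (r + 1) * h $ (r + 1) + A $ r $ (r + 2) * h $ (r + 2)"
  unfolding matrix_vector_mult_def by (subst UNIV_3_rotate[of r]) (simp add: add.assoc)

lemma edge_len_pos: "1 < exp (x + y) * cosh (l0 / 2) \<Longrightarrow> 0 < edge_len l0 x y"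
  by (simp add: edge_len_def)

lemma has_derivative_edge_len:
  fixes f g :: "'a::real_normed_vector \<Rightarrow> real"
  assumes f: "(f has_derivative f') (at w)" and g: "(g has_derivative g') (at w)"
    and gt: "1 < exp (f w + g w) * cosh (l0 / 2)"
  defines "l \<equiv> edge_len l0 (f w) (g w)"
  shows "((\<lambda>x. edge_len l0 (f x) (g x)) has_derivative
           (\<lambda>h. 2 * sinh l / (cosh l - 1) * (f' h + g' h))) (at w)"
proof -
  define u where "u = exp (f w + g w) * cosh (l0 / 2)"
  define s where "s = sqrt (u\<^sup>2 - 1)"
  have u: "1 < u" using gt by (simp add: u_def)
  have s: "0 < s" "s\<^sup>2 = u\<^sup>2 - 1"
    using u by (simp_all add: s_def one_less_power)
  have l: "l = 2 * arcosh u" by (simp add: l_def edge_len_def u_def)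
  have "sinh l = 2 * u * s" "cosh l - 1 = 2 * s\<^sup>2"
    using u s(2) unfolding l s_def by (simp_all add: sinh_double cosh_double_cosh sinh_arcosh_real)
  then have "2 * sinh l / (cosh l - 1) = 2 * u / s"
    using s(1) by (simp add: power2_eq_square)
  moreover have "((\<lambda>x. 2 * arcosh (exp (f x + g x) * cosh (l0 / 2))) has_derivative
      (\<lambda>h. 2 * u / s * (f' h + g' h))) (at w)"
    using u unfolding u_def s_def
    by (auto intro!: derivative_eq_intros DERIV_compose_FDERIV[where f = arcosh] f g)
  ultimately show ?thesis by (simp add: edge_len_def)
qed

definition hex_disc :: "real \<Rightarrow> real \<Rightarrow> real \<Rightarrow> real" where
  "hex_disc x y z = x\<^sup>2 + y\<^sup>2 + z\<^sup>2 + 2 * x * y * z - 1"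

lemma hex_disc_cyclic: "hex_disc y z x = hex_disc x y z"
  by (simp add: hex_disc_def algebra_simps)

lemma hex_disc_pos:
  assumes "1 < x" "1 < y" "1 < z"
  shows "0 < hex_disc x y z"
proof -
  have "1 < x\<^sup>2" "0 < 2 * x * y * z" using assms by (simp_all add: one_less_power)
  then show ?thesis
    unfolding hex_disc_def using zero_le_power2[of y] zero_le_power2[of z] by linarith
qed

lemma hex_opp_arg_gt_1:
  fixes a b c :: real
  assumes "0 < a" "0 < b" "0 < c"
  shows "1 < (cosh a + cosh b * cosh c) / (sinh b * sinh c)"
proof -
  have "1 \<le> cosh b * cosh c - sinh b * sinh c"
    using cosh_diff[of b c] cosh_real_ge_1[of "b - c"] by simp
  then show ?thesis
    using cosh_gt_1_real[of a] assms by (simp add: less_divide_eq)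
qed

lemma hex_opp_arg_sq_minus_1:
  fixes a b c :: real
  assumes "b \<noteq> 0" "c \<noteq> 0"
  shows "((cosh a + cosh b * cosh c) / (sinh b * sinh c))\<^sup>2 - 1
           = hex_disc (cosh a) (cosh b) (cosh c) / (sinh b * sinh c)\<^sup>2"
proof -
  have "(cosh a + cosh b * cosh c)\<^sup>2 - (sinh b * sinh c)\<^sup>2 = hex_disc (cosh a) (cosh b) (cosh c)"
    unfolding hex_disc_def power_mult_distrib sinh_square_eq by algebra
  then show ?thesis
    using assms by (simp add: field_simps)
qed

lemma has_derivative_hex_opp:
  fixes fa fb fc :: "'a::real_normed_vector \<Rightarrow> real"
  assumes fa: "(fa has_derivative fa') (at w)" and fb: "(fb has_derivative fb') (at w)"
    and fc: "(fc has_derivative fc') (at w)"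
    and pos: "0 < fa w" "0 < fb w" "0 < fc w"
  defines "a \<equiv> fa w" and "b \<equiv> fb w" and "c \<equiv> fc w"
  shows "((\<lambda>x. hex_opp (fa x) (fb x) (fc x)) has_derivative
           (\<lambda>h. (sinh a * fa' h - (cosh c + cosh a * cosh b) / sinh b * fb' h
                  - (cosh b + cosh a * cosh c) / sinh c * fc' h)
                / sqrt (hex_disc (cosh a) (cosh b) (cosh c)))) (at w)"
proof -
  define q where "q = (cosh a + cosh b * cosh c) / (sinh b * sinh c)"
  have abc: "0 < a" "0 < b" "0 < c" using pos by (simp_all add: a_def b_def c_def)
  have q: "1 < q" using hex_opp_arg_gt_1[OF abc] by (simp add: q_def)
  have arg: "((\<lambda>x. (cosh (fa x) + cosh (fb x) * cosh (fc x)) / (sinh (fb x) * sinh (fc x)))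
      has_derivative (\<lambda>h. (sinh a * fa' h - (cosh c + cosh a * cosh b) / sinh b * fb' h
                  - (cosh b + cosh a * cosh c) / sinh c * fc' h) / (sinh b * sinh c))) (at w)"
    apply (rule has_derivative_eq_rhs)
     apply (use abc in \<open>auto intro!: derivative_eq_intros fa fb fc simp: a_def b_def c_def\<close>)[1]
    using abc apply (simp add: fun_eq_iff field_simps a_def[symmetric] b_def[symmetric] c_def[symmetric])
    using cosh_square_eq[of b] cosh_square_eq[of c] by (intro allI) algebra
  have "sqrt (q\<^sup>2 - 1) = sqrt (hex_disc (cosh a) (cosh b) (cosh c)) / (sinh b * sinh c)"
    using abc by (simp add: q_def hex_opp_arg_sq_minus_1 real_sqrt_divide)
  moreover have "0 < sinh b * sinh c" using abc by simp
  moreover have "(arcosh has_real_derivative 1 / sqrt (q\<^sup>2 - 1))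
      (at ((cosh (fa w) + cosh (fb w) * cosh (fc w)) / (sinh (fb w) * sinh (fc w))))"
    using arcosh_real_has_field_derivative[OF q] by (simp add: q_def a_def b_def c_def)
  note DERIV_compose_FDERIV[OF this arg]
  ultimately show ?thesis
    using pos by (simp add: hex_opp_def q_def a_def b_def c_def)
qed

definition hex_jac_diag :: "real \<Rightarrow> real \<Rightarrow> real \<Rightarrow> real" where
  "hex_jac_diag x y z = - ((z + x * y) / (y - 1) + (y + x * z) / (z - 1))"

definition hex_jac_off :: "real \<Rightarrow> real \<Rightarrow> real \<Rightarrow> real" where
  "hex_jac_off t x y = (t - x - y - 1) / (t - 1)"

lemma hex_jac_off_commute: "hex_jac_off t x y = hex_jac_off t y x"
  by (simp add: hex_jac_off_def algebra_simps)

lemma hex_opp_edge_chain_algebra: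
  fixes a b c p q s :: real
  assumes "0 < a" "0 < b" "0 < c"
  defines "x \<equiv> cosh a" and "y \<equiv> cosh b" and "z \<equiv> cosh c"
  shows "sinh a * (2 * sinh a / (x - 1) * (q + s))
           - (z + x * y) / sinh b * (2 * sinh b / (y - 1) * (s + p))
           - (y + x * z) / sinh c * (2 * sinh c / (z - 1) * (p + q))
         = 2 * (hex_jac_diag x y z * p + hex_jac_off z x y * q + hex_jac_off y x z * s)"
proof -
  have "1 < x" "1 < y" "1 < z" using assms cosh_gt_1_real by auto
  have "sinh a * sinh a = (x - 1) * (x + 1)"
    using sinh_square_eq[of a] by (simp add: x_def power2_eq_square algebra_simps)
  then have "sinh a * (2 * sinh a / (x - 1)) = 2 * (x + 1)"
    using \<open>1 < x\<close> by (simp add: mult.left_commute[of _ 2])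
  moreover have "(z + x * y) / sinh b * (2 * sinh b / (y - 1)) = 2 * ((z + x * y) / (y - 1))"
    "(y + x * z) / sinh c * (2 * sinh c / (z - 1)) = 2 * ((y + x * z) / (z - 1))"
    using assms(2,3) by simp_all
  moreover have "2 * (x + 1) * (q + s) - 2 * ((z + x * y) / (y - 1)) * (s + p)
      - 2 * ((y + x * z) / (z - 1)) * (p + q)
      = 2 * (hex_jac_diag x y z * p + hex_jac_off z x y * q + hex_jac_off y x z * s)"
  proof -
    define A where "A = (z + x * y) / (y - 1)"
    define B where "B = (y + x * z) / (z - 1)"
    have off: "hex_jac_off z x y = x + 1 - B" "hex_jac_off y x z = x + 1 - A"
      using \<open>1 < y\<close> \<open>1 < z\<close> by (simp_all add: hex_jac_off_def A_def B_def field_simps)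
    have diag: "hex_jac_diag x y z = - (A + B)" by (simp add: hex_jac_diag_def A_def B_def)
    show ?thesis unfolding A_def[symmetric] B_def[symmetric] off diag by (simp add: algebra_simps)
  qed
  ultimately show ?thesis by (metis mult.assoc times_divide_eq_left)
qed

lemma hex_jac_diag_neg:
  assumes "1 < x" "1 < y" "1 < z"
  shows "hex_jac_diag x y z < 0"
proof -
  have "0 < (z + x * y) / (y - 1)" "0 < (y + x * z) / (z - 1)"
    using assms by (auto intro!: divide_pos_pos add_pos_pos mult_pos_pos)
  then show ?thesis by (simp add: hex_jac_diag_def)
qed

lemma abs_hex_jac_off_less:
  assumes "1 < t" "1 < x" "0 < y"
  shows "\<bar>hex_jac_off t x y\<bar> < (y + x * t) / (t - 1)"
proof -
  have "0 < (x - 1) * (t + 1)" "0 < (x + 1) * (t - 1)" using assms by simp_all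
  then have "\<bar>t - x - y - 1\<bar> < y + x * t" using assms(3) by (simp add: abs_less_iff algebra_simps)
  then show ?thesis using assms(1) by (simp add: hex_jac_off_def abs_divide divide_strict_right_mono)
qed

lemma hex_jac_diag_dominant:
  assumes "1 < x" "1 < y" "1 < z"
  shows "\<bar>hex_jac_off z x y\<bar> + \<bar>hex_jac_off y x z\<bar> < \<bar>hex_jac_diag x y z\<bar>"
  using abs_hex_jac_off_less[of z x y] abs_hex_jac_off_less[of y x z] hex_jac_diag_neg[OF assms] assms
  by (simp add: hex_jac_diag_def)

lemma hex_disc_rotate:
  fixes c :: "3 \<Rightarrow> real"
  shows "hex_disc (c s) (c (s + 1)) (c (s + 2)) = hex_disc (c r) (c (r + 1)) (c (r + 2))"
proof -
  have step: "hex_disc (c (t + 1)) (c (t + 2)) (c (t + 3)) = hex_disc (c t) (c (t + 1)) (c (t + 2))"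
    for t :: 3 by (simp add: add_3_type_3 hex_disc_cyclic)
  show ?thesis
    using UNIV_3_rotate[of r] step[of r] step[of "r + 1"] by (auto simp: add.assoc)
qed

text \<open>\<open>c r\<close> is the cosh of the side opposite to \<open>\<theta>\<^sub>r\<close>. Since \<open>1 + 2 + 3 = 0\<close> in type \<open>3\<close>,
  \<open>- (r + s)\<close> is the index different from \<open>r\<close> and \<open>s\<close>.\<close>

definition theta_jacobian :: "(3 \<Rightarrow> real) \<Rightarrow> real^3^3" where
  "theta_jacobian c = (\<chi> r s. 2 / sqrt (hex_disc (c 1) (c 2) (c 3)) *
     (if s = r then hex_jac_diag (c r) (c (r + 1)) (c (r + 2))
      else hex_jac_off (c (- (r + s))) (c r) (c s)))"

lemma theta_jacobian_row:
  fixes c :: "3 \<Rightarrow> real" and r :: 3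
  defines "K \<equiv> 2 / sqrt (hex_disc (c r) (c (r + 1)) (c (r + 2)))"
  shows "theta_jacobian c $ r $ r = K * hex_jac_diag (c r) (c (r + 1)) (c (r + 2))"
    and "theta_jacobian c $ r $ (r + 1) = K * hex_jac_off (c (r + 2)) (c r) (c (r + 1))"
    and "theta_jacobian c $ r $ (r + 2) = K * hex_jac_off (c (r + 1)) (c r) (c (r + 2))"
proof -
  have "hex_disc (c 1) (c 2) (c 3) = hex_disc (c r) (c (r + 1)) (c (r + 2))"
    using hex_disc_rotate[of c 1 r] by simp
  then show "theta_jacobian c $ r $ r = K * hex_jac_diag (c r) (c (r + 1)) (c (r + 2))"
    and "theta_jacobian c $ r $ (r + 1) = K * hex_jac_off (c (r + 2)) (c r) (c (r + 1))"
    and "theta_jacobian c $ r $ (r + 2) = K * hex_jac_off (c (r + 1)) (c r) (c (r + 2))"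
    unfolding theta_jacobian_def K_def vec_lambda_beta third_index_3 by simp_all
qed

lemma theta_jacobian_symmetric: "transpose (theta_jacobian c) = theta_jacobian c"
  by (simp add: vec_eq_iff transpose_def theta_jacobian_def hex_jac_off_commute add.commute)

lemma theta_jacobian_diag_neg:
  assumes "\<And>s. 1 < c s"
  shows "theta_jacobian c $ r $ r < 0"
  using hex_disc_pos[OF assms assms assms] hex_jac_diag_neg[OF assms assms assms]
  by (auto simp: theta_jacobian_row intro!: divide_neg_pos)

lemma theta_jacobian_diag_dominant:
  assumes "\<And>s. 1 < c s"
  shows "(\<Sum>s\<in>UNIV - {r}. \<bar>theta_jacobian c $ r $ s\<bar>) < \<bar>theta_jacobian c $ r $ r\<bar>"
proof -
  define K where "K = 2 / sqrt (hex_disc (c r) (c (r + 1)) (c (r + 2)))"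
  have K: "0 < K" using hex_disc_pos[OF assms assms assms] by (simp add: K_def)
  have "r + 1 \<noteq> r + 2" by simp
  then have "(\<Sum>s\<in>UNIV - {r}. \<bar>theta_jacobian c $ r $ s\<bar>)
      = K * (\<bar>hex_jac_off (c (r + 2)) (c r) (c (r + 1))\<bar> + \<bar>hex_jac_off (c (r + 1)) (c r) (c (r + 2))\<bar>)"
    using K by (simp add: UNIV_3_minus theta_jacobian_row abs_mult distrib_left K_def)
  also have "\<dots> < K * \<bar>hex_jac_diag (c r) (c (r + 1)) (c (r + 2))\<bar>"
    using K hex_jac_diag_dominant[OF assms assms assms] by simp
  also have "\<dots> = \<bar>theta_jacobian c $ r $ r\<bar>"
    using K by (simp add: theta_jacobian_row abs_mult K_def)
  finally show ?thesis .
qed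

text \<open>Side \<open>r\<close> joins the vertices \<open>r\<close> and \<open>r + 1\<close>, so sides 1, 2, 3 are
  \<open>l\<^sub>i\<^sub>j, l\<^sub>j\<^sub>k, l\<^sub>k\<^sub>i\<close>; \<open>L0 r\<close> is its initial length.\<close>

definition side_len :: "(3 \<Rightarrow> real) \<Rightarrow> real^3 \<Rightarrow> 3 \<Rightarrow> real" where
  "side_len L0 v r = edge_len (L0 r) (v $ r) (v $ (r + 1))"

lemma has_derivative_theta_nth:
  fixes L0 :: "3 \<Rightarrow> real" and w :: "real^3" and r :: 3
  assumes adm: "\<And>s. 1 < exp (w $ s + w $ (s + 1)) * cosh (L0 s / 2)"
  shows "((\<lambda>v. hex_opp (side_len L0 v (r + 1)) (side_len L0 v (r + 2)) (side_len L0 v r)) has_derivative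
           (\<lambda>h. (theta_jacobian (\<lambda>s. cosh (side_len L0 w (s + 1))) *v h) $ r)) (at w)"
proof -
  define e where "e s = 2 * sinh (side_len L0 w s) / (cosh (side_len L0 w s) - 1)" for s
  have nth: "((\<lambda>v. v $ s) has_derivative (\<lambda>h. h $ s)) (at w)" for s :: 3
    by (rule bounded_linear_imp_has_derivative[OF bounded_linear_vec_nth])
  have side: "((\<lambda>v. side_len L0 v s) has_derivative (\<lambda>h. e s * (h $ s + h $ (s + 1)))) (at w)" for s
    using has_derivative_edge_len[OF nth nth adm] by (simp add: side_len_def e_def)
  have pos: "0 < side_len L0 w s" for s
    using edge_len_pos[OF adm] by (simp add: side_len_def)
  have idx: "r + 1 + 1 = r + 2" "r + 2 + 1 = r"
    by (simp_all add: add.assoc add_3_type_3)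
  show ?thesis
    apply (rule has_derivative_eq_rhs[OF has_derivative_hex_opp[OF side side side pos pos pos]])
    apply (rule ext)
    subgoal for h
      unfolding idx e_def hex_opp_edge_chain_algebra[OF pos[of "r + 1"] pos[of "r + 2"] pos[of r]]
      by (simp add: matrix_vector_mult_nth_3 theta_jacobian_row idx add_divide_distrib)
    done
qed

definition initial_len :: "real \<Rightarrow> real \<Rightarrow> real \<Rightarrow> 3 \<Rightarrow> real" where
  "initial_len l0ij l0jk l0ki r = (if r = 1 then l0ij else if r = 2 then l0jk else l0ki)"

lemma W_dia_side_admissible:
  assumes "w \<in> W_dia l0ij l0jk l0ki"
  shows "1 < exp (w $ r + w $ (r + 1)) * cosh (initial_len l0ij l0jk l0ki r / 2)"
proof -
  have "\<forall>r. 1 < exp (w $ r + w $ (r + 1)) * cosh (initial_len l0ij l0jk l0ki r / 2)"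
    using assms unfolding forall_3
    by (simp add: W_dia_def initial_len_def one_less_exp_mult_iff numeral_reduce_3 add.commute)
  from this[rule_format] show ?thesis .
qed

lemma theta_map_nth:
  "theta_map l0ij l0jk l0ki v $ r
     = hex_opp (side_len (initial_len l0ij l0jk l0ki) v (r + 1))
         (side_len (initial_len l0ij l0jk l0ki) v (r + 2)) (side_len (initial_len l0ij l0jk l0ki) v r)"
proof -
  have "\<forall>r. theta_map l0ij l0jk l0ki v $ r
     = hex_opp (side_len (initial_len l0ij l0jk l0ki) v (r + 1))
         (side_len (initial_len l0ij l0jk l0ki) v (r + 2)) (side_len (initial_len l0ij l0jk l0ki) v r)"
    unfolding forall_3 by (simp add: theta_map_def Let_def side_len_def initial_len_def numeral_reduce_3)
  from this[rule_format] show ?thesis .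
qed

lemma has_derivative_theta_map:
  assumes "w \<in> W_dia l0ij l0jk l0ki"
  shows "(theta_map l0ij l0jk l0ki has_derivative
           (\<lambda>h. theta_jacobian (\<lambda>r. cosh (side_len (initial_len l0ij l0jk l0ki) w (r + 1))) *v h)) (at w)"
proof (rule has_derivative_vec_iff[THEN iffD2, rule_format])
  fix r
  show "((\<lambda>x. theta_map l0ij l0jk l0ki x $ r) has_derivative
      (\<lambda>h. (theta_jacobian (\<lambda>r. cosh (side_len (initial_len l0ij l0jk l0ki) w (r + 1))) *v h) $ r)) (at w)"
    unfolding theta_map_nth by (rule has_derivative_theta_nth[OF W_dia_side_admissible[OF assms]])
qed

theorem lemma2p2:
  fixes l0ij l0jk l0ki :: real and w :: "real ^ 3"
  assumes "l0ij > 0" and "l0jk > 0" and "l0ki > 0"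
    and "w \<in> W_dia l0ij l0jk l0ki"
  shows "\<exists>J :: real ^ 3 ^ 3.
           (theta_map l0ij l0jk l0ki has_derivative (\<lambda>h. J *v h)) (at w) \<and>
           transpose J = J \<and>
           (\<forall>r. \<bar>J $ r $ r\<bar> > (\<Sum>s\<in>UNIV - {r}. \<bar>J $ r $ s\<bar>)) \<and>
           (\<forall>h. h \<noteq> 0 \<longrightarrow> h \<bullet> (J *v h) < 0)"
proof -
  define c where "c r = cosh (side_len (initial_len l0ij l0jk l0ki) w (r + 1))" for r
  have c_gt_1: "1 < c r" for r
    unfolding c_def side_len_def
    using edge_len_pos[OF W_dia_side_admissible[OF assms(4)]] by (rule cosh_gt_1_real)
  show ?thesis
  proof (intro exI conjI allI impI)
    show "(theta_map l0ij l0jk l0ki has_derivative (\<lambda>h. theta_jacobian c *v h)) (at w)"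
      unfolding c_def using assms(4) by (rule has_derivative_theta_map)
    show sym: "transpose (theta_jacobian c) = theta_jacobian c"
      by (rule theta_jacobian_symmetric)
    show dom: "(\<Sum>s\<in>UNIV - {r}. \<bar>theta_jacobian c $ r $ s\<bar>) < \<bar>theta_jacobian c $ r $ r\<bar>" for r
      using c_gt_1 by (rule theta_jacobian_diag_dominant)
    show "h \<bullet> (theta_jacobian c *v h) < 0" if "h \<noteq> 0" for h
      using sym theta_jacobian_diag_neg[OF c_gt_1] dom that by (rule neg_definite_if_diag_dominant)
  qed
qed

end
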